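(* Let $r,k\geq 2$ be integers. Then $0\in D_{r,k}$, and whenever $d,d'\in D_{r,k}$ we have $d+d'\in D_{r,k}$.
   Context: For positive integers $v,b,r,k$, a $(v,b,r,k)$-configuration is a connected bipartite graph with $v$ vertices on one side, each of degree $r$, and $b$ vertices on the other side, each of degree $k$, containing no cycle of length $4$. By convention the empty graph (with $v=b=0$) is also regarded as a configuration. A tuple $(v,b,r,k)$ is configurable if a $(v,b,r,k)$-configuration exists. Let $\mathbb{N}_0=\{0,1,2,\dots\}$ and define $$D_{r,k}=\left\{d\in\mathbb{N}_0:\left(d\tfrac{k}{\gcd(r,k)},\,d\tfrac{r}{\gcd(r,k)},\,r,\,k\right)\text{ is configurable}\right\}.$$ *)

theory Defs
  imports Main
begin

text \<open>Vertices are represented by natural numbers;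
  the two sides are kept disjoint via the Inl/Inr tagging in the vertex set.\<close>

definition cfg_vertices :: "nat set \<Rightarrow> nat set \<Rightarrow> (nat + nat) set" where
  "cfg_vertices P B = Inl ` P \<union> Inr ` B"

definition cfg_adj :: "(nat \<times> nat) set \<Rightarrow> ((nat + nat) \<times> (nat + nat)) set" where
  "cfg_adj I = {(Inl p, Inr x) | p x. (p, x) \<in> I} \<union> {(Inr x, Inl p) | p x. (p, x) \<in> I}"

definition cfg_connected :: "nat set \<Rightarrow> nat set \<Rightarrow> (nat \<times> nat) set \<Rightarrow> bool" where
  "cfg_connected P B I \<longleftrightarrow>
     (\<forall>u \<in> cfg_vertices P B. \<forall>w \<in> cfg_vertices P B. (u, w) \<in> (cfg_adj I)\<^sup>*)"

definition no_C4 :: "(nat \<times> nat) set \<Rightarrow> bool" where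
  "no_C4 I \<longleftrightarrow> \<not> (\<exists>p1 p2 x1 x2. p1 \<noteq> p2 \<and> x1 \<noteq> x2 \<and>
       (p1, x1) \<in> I \<and> (p1, x2) \<in> I \<and> (p2, x1) \<in> I \<and> (p2, x2) \<in> I)"

definition is_configuration ::
  "nat \<Rightarrow> nat \<Rightarrow> nat \<Rightarrow> nat \<Rightarrow> nat set \<Rightarrow> nat set \<Rightarrow> (nat \<times> nat) set \<Rightarrow> bool" where
  "is_configuration v b r k P B I \<longleftrightarrow>
     finite P \<and> finite B \<and> I \<subseteq> P \<times> B \<and> card P = v \<and> card B = b \<and>
     (\<forall>p \<in> P. card {x \<in> B. (p, x) \<in> I} = r) \<and>
     (\<forall>x \<in> B. card {p \<in> P. (p, x) \<in> I} = k) \<and>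
     no_C4 I \<and> cfg_connected P B I"

text \<open>The empty graph (v = b = 0) satisfies this definition, matching the convention.\<close>
definition configurable :: "nat \<Rightarrow> nat \<Rightarrow> nat \<Rightarrow> nat \<Rightarrow> bool" where
  "configurable v b r k \<longleftrightarrow> (\<exists>P B I. is_configuration v b r k P B I)"

definition D_set :: "nat \<Rightarrow> nat \<Rightarrow> nat set" where
  "D_set r k = {d. configurable (d * (k div gcd r k)) (d * (r div gcd r k)) r k}"

end

theory Submission imports Defs begin

text \<open>For sums we glue: a configuration with \<open>r, k \<ge> 2\<close> has minimum degree
  at least two, so it contains a cycle and hence an edge \<open>(p, x)\<close> that is not a bridge.
  Given two such configurations on disjoint vertex sets, with non-bridges \<open>(p, x)\<close> and
  \<open>(p', x')\<close>, replace these two edges by \<open>(p, x')\<close> and \<open>(p', x)\<close>: all degrees are kept,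
  each half stays connected and the new edges join the halves, and a 4-cycle would have to use
  both new edges together with the deleted edge \<open>(p, x)\<close>.\<close>

section \<open>Non-bridges in graphs of minimum degree two\<close>

text \<open>Here \<open>E\<close> is a symmetric edge relation given by its arcs; the hypothesis \<open>deg\<close> says that
  every walk can be continued without immediately turning back.  Take an arc \<open>(u, w)\<close> for
  which the part reachable from \<open>w\<close> without using \<open>{u, w}\<close> is smallest; if \<open>{w, z}\<close>
  (\<open>z \<noteq> u\<close>) were a bridge too, that part would shrink.\<close>

lemma exists_non_bridge:
  fixes E :: "('a \<times> 'a) set"
  assumes fin: "finite V" and EV: "E \<subseteq> V \<times> V" and ne: "E \<noteq> {}"
    and irrefl: "\<And>u. (u, u) \<notin> E"
    and deg: "\<And>u w. (u, w) \<in> E \<Longrightarrow> \<exists>z. (w, z) \<in> E \<and> z \<noteq> u"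
  shows "\<exists>u w. (u, w) \<in> E \<and> (w, u) \<in> (E - {(u, w), (w, u)})\<^sup>*"
proof (rule ccontr)
  assume no_cycle: "\<not> ?thesis"
  define S where "S u w = {y. (w, y) \<in> (E - {(u, w), (w, u)})\<^sup>*}" for u w
  have S_finite: "finite (S u w)" if "(u, w) \<in> E" for u w
  proof (rule finite_subset[OF _ fin], rule subsetI)
    fix y assume "y \<in> S u w"
    then have "(w, y) \<in> (E - {(u, w), (w, u)})\<^sup>*" by (simp add: S_def)
    then show "y \<in> V" using that EV by (induction rule: rtrancl_induct) auto
  qed
  obtain u w where uw: "(u, w) \<in> E"
    and uw_min: "\<And>u' w'. (u', w') \<in> E \<Longrightarrow> card (S u w) \<le> card (S u' w')"
    using ex_has_least_nat[of "\<lambda>(u, w). (u, w) \<in> E" _ "\<lambda>(u, w). card (S u w)"] ne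
    by fastforce
  obtain z where wz: "(w, z) \<in> E" "z \<noteq> u" using deg uw by blast
  have wz_bridge: "(z, w) \<notin> (E - {(w, z), (z, w)})\<^sup>*" using no_cycle wz(1) by blast
  have "S w z \<subseteq> S u w"
  proof
    fix y assume "y \<in> S w z"
    then have "(z, y) \<in> (E - {(w, z), (z, w)})\<^sup>*" by (simp add: S_def)
    then have "(w, y) \<in> (E - {(u, w), (w, u)})\<^sup>*"
    proof (induction rule: rtrancl_induct)
      case base
      then show ?case using wz by auto
    next
      case (step y1 y2)
      have "(y1, y2) \<in> E - {(u, w), (w, u)}"
      proof (rule ccontr)
        assume "(y1, y2) \<notin> E - {(u, w), (w, u)}"
        then have "(y1, y2) = (u, w) \<or> (y1, y2) = (w, u)" using step by auto
        then have "(z, w) \<in> (E - {(w, z), (z, w)})\<^sup>*"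
          using step irrefl[of u] wz(2) by (auto intro: rtrancl_into_rtrancl)
        then show False using wz_bridge by blast
      qed
      then show ?case using step by (meson rtrancl.rtrancl_into_rtrancl)
    qed
    then show "y \<in> S u w" by (simp add: S_def)
  qed
  moreover have "w \<in> S u w" "w \<notin> S w z" using wz_bridge by (auto simp: S_def)
  ultimately have "card (S w z) < card (S u w)"
    using S_finite[OF uw] by (metis psubset_card_mono psubsetI)
  then show False using uw_min[OF wz(1)] by simp
qed

lemma cfg_adj_converse [simp]: "(cfg_adj I)\<inverse> = cfg_adj I"
  unfolding cfg_adj_def by auto

lemma cfg_adj_rtrancl_sym: "(u, w) \<in> (cfg_adj I)\<^sup>* \<Longrightarrow> (w, u) \<in> (cfg_adj I)\<^sup>*"
  using rtrancl_converseI[of u w "cfg_adj I"] by simp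

lemma cfg_adj_Diff_edge: "cfg_adj (I - {(p, x)}) = cfg_adj I - {(Inl p, Inr x), (Inr x, Inl p)}"
  unfolding cfg_adj_def by auto

lemma cfg_adj_mono: "I \<subseteq> J \<Longrightarrow> cfg_adj I \<subseteq> cfg_adj J"
  unfolding cfg_adj_def by auto

lemma cfg_connectedI_root:
  assumes "\<And>u. u \<in> cfg_vertices P B \<Longrightarrow> (u, c) \<in> (cfg_adj I)\<^sup>*"
  shows "cfg_connected P B I"
  unfolding cfg_connected_def
  using assms by (meson cfg_adj_rtrancl_sym rtrancl_trans)

lemma cfg_connected_Un:
  assumes con1: "cfg_connected P1 B1 I1" and con2: "cfg_connected P2 B2 I2"
    and sub: "I1 \<union> I2 \<union> {(p, x)} \<subseteq> I" and p: "p \<in> P1" and x: "x \<in> B2"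
  shows "cfg_connected (P1 \<union> P2) (B1 \<union> B2) I"
proof (rule cfg_connectedI_root)
  have mono: "(cfg_adj I1)\<^sup>* \<subseteq> (cfg_adj I)\<^sup>*" "(cfg_adj I2)\<^sup>* \<subseteq> (cfg_adj I)\<^sup>*"
    using sub by (intro rtrancl_mono cfg_adj_mono; blast)+
  have bridge: "(Inr x, Inl p) \<in> cfg_adj I" using sub unfolding cfg_adj_def by auto
  fix u assume "u \<in> cfg_vertices (P1 \<union> P2) (B1 \<union> B2)"
  then have "u \<in> cfg_vertices P1 B1 \<or> u \<in> cfg_vertices P2 B2"
    unfolding cfg_vertices_def by auto
  moreover have "Inl p \<in> cfg_vertices P1 B1" "Inr x \<in> cfg_vertices P2 B2"
    using p x unfolding cfg_vertices_def by auto
  ultimately show "(u, Inl p) \<in> (cfg_adj I)\<^sup>*"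
    using con1 con2 mono bridge unfolding cfg_connected_def
    by (meson rtrancl.rtrancl_into_rtrancl subsetD)
qed

lemma ex_neq_if_card_ge_2:
  assumes "finite A" "card A \<ge> 2" shows "\<exists>y\<in>A. y \<noteq> a"
  using assms by (metis card_le_Suc0_iff_eq nat_le_linear not_less_eq_eq numeral_2_eq_2)

lemma mem_cfg_adj_cases:
  assumes "(u, w) \<in> cfg_adj I"
  obtains p x where "(p, x) \<in> I" "u = Inl p" "w = Inr x"
    | p x where "(p, x) \<in> I" "u = Inr x" "w = Inl p"
  using assms unfolding cfg_adj_def by blast

lemma configuration_non_bridge:
  assumes cfg: "is_configuration v b r k P B I" and r: "r \<ge> 2" and k: "k \<ge> 2"
    and ne: "P \<noteq> {}"
  obtains p x where "(p, x) \<in> I" and "cfg_connected P B (I - {(p, x)})"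
proof -
  from cfg have fin: "finite P" "finite B" and IPB: "I \<subseteq> P \<times> B"
    and deg_points: "\<forall>p \<in> P. card {x \<in> B. (p, x) \<in> I} = r"
    and deg_blocks: "\<forall>x \<in> B. card {p \<in> P. (p, x) \<in> I} = k"
    and con: "cfg_connected P B I"
    unfolding is_configuration_def by auto
  have other_block: "\<exists>y. (q, y) \<in> I \<and> y \<noteq> a" if "q \<in> P" for q a
    using ex_neq_if_card_ge_2[of "{x \<in> B. (q, x) \<in> I}" a] deg_points that r fin by auto
  have other_point: "\<exists>y. (y, q) \<in> I \<and> y \<noteq> a" if "q \<in> B" for q a
    using ex_neq_if_card_ge_2[of "{p \<in> P. (p, q) \<in> I}" a] deg_blocks that k fin by auto
  let ?E = "cfg_adj I"
  have "finite (cfg_vertices P B)" using fin unfolding cfg_vertices_def by auto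
  moreover have "?E \<subseteq> cfg_vertices P B \<times> cfg_vertices P B"
    using IPB unfolding cfg_adj_def cfg_vertices_def by auto
  moreover obtain p0 x0 where "(p0, x0) \<in> I" using ne other_block by blast
  then have "?E \<noteq> {}" unfolding cfg_adj_def by blast
  moreover have "(u, u) \<notin> ?E" for u unfolding cfg_adj_def by auto
  moreover have "\<exists>z. (w, z) \<in> ?E \<and> z \<noteq> u" if "(u, w) \<in> ?E" for u w
    using that
  proof (cases rule: mem_cfg_adj_cases)
    case (1 p x)
    then obtain y where "(y, x) \<in> I" "y \<noteq> p" using other_point IPB by blast
    then show ?thesis using 1 unfolding cfg_adj_def by blast
  next
    case (2 p x)
    then obtain y where "(p, y) \<in> I" "y \<noteq> x" using other_block IPB by blast
    then show ?thesis using 2 unfolding cfg_adj_def by blast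
  qed
  ultimately obtain u w where uw: "(u, w) \<in> ?E" "(w, u) \<in> (?E - {(u, w), (w, u)})\<^sup>*"
    using exists_non_bridge by metis
  obtain p x where px: "(p, x) \<in> I" and cycle: "(Inr x, Inl p) \<in> (cfg_adj (I - {(p, x)}))\<^sup>*"
    using uw(1)
  proof (cases rule: mem_cfg_adj_cases)
    case (1 p x)
    then show thesis using that uw(2) unfolding cfg_adj_Diff_edge by blast
  next
    case (2 p x)
    then have "(Inl p, Inr x) \<in> (cfg_adj (I - {(p, x)}))\<^sup>*"
      using uw(2) unfolding cfg_adj_Diff_edge by (simp add: insert_commute)
    then show thesis using that 2 cfg_adj_rtrancl_sym by blast
  qed
  have "?E \<subseteq> (cfg_adj (I - {(p, x)}))\<^sup>*"
    using cycle cfg_adj_rtrancl_sym[OF cycle] unfolding cfg_adj_Diff_edge by blast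
  then have "?E\<^sup>* \<subseteq> (cfg_adj (I - {(p, x)}))\<^sup>*" by (rule rtrancl_subset_rtrancl)
  then show thesis using that px con unfolding cfg_connected_def by blast
qed

lemma no_C4_image:
  assumes "inj f" and "no_C4 I"
  shows "no_C4 (map_prod f f ` I)"
proof (unfold no_C4_def, intro notI, elim exE conjE)
  have mem: "(f a, f c) \<in> map_prod f f ` I \<longleftrightarrow> (a, c) \<in> I" for a c
    using assms(1) by (auto simp: inj_eq)
  fix p1 p2 x1 x2
  assume ne: "p1 \<noteq> p2" "x1 \<noteq> x2"
    and edges: "(p1, x1) \<in> map_prod f f ` I" "(p1, x2) \<in> map_prod f f ` I"
      "(p2, x1) \<in> map_prod f f ` I" "(p2, x2) \<in> map_prod f f ` I"
  obtain a1 c1 where 1: "p1 = f a1" "x1 = f c1" using edges(1) by auto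
  obtain a2 c2 where 2: "p2 = f a2" "x2 = f c2" using edges(4) by auto
  have "(a1, c1) \<in> I" "(a1, c2) \<in> I" "(a2, c1) \<in> I" "(a2, c2) \<in> I"
    using edges mem unfolding 1 2 by simp_all
  moreover have "a1 \<noteq> a2" "c1 \<noteq> c2" using ne unfolding 1 2 by auto
  ultimately show False using assms(2) unfolding no_C4_def by blast
qed

lemma cfg_connected_image:
  assumes "inj f" and con: "cfg_connected P B I"
  shows "cfg_connected (f ` P) (f ` B) (map_prod f f ` I)"
  unfolding cfg_connected_def
proof (intro ballI)
  let ?g = "map_sum f f"
  have adj: "(?g u, ?g w) \<in> cfg_adj (map_prod f f ` I)" if "(u, w) \<in> cfg_adj I" for u w
    using that unfolding cfg_adj_def by auto
  have walk: "(?g u, ?g w) \<in> (cfg_adj (map_prod f f ` I))\<^sup>*" if "(u, w) \<in> (cfg_adj I)\<^sup>*" for u w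
    using that by (induction rule: rtrancl_induct) (auto intro: rtrancl_into_rtrancl adj)
  have "cfg_vertices (f ` P) (f ` B) = ?g ` cfg_vertices P B"
    unfolding cfg_vertices_def by (simp add: image_Un image_image)
  moreover fix u' w' assume "u' \<in> cfg_vertices (f ` P) (f ` B)" "w' \<in> cfg_vertices (f ` P) (f ` B)"
  ultimately obtain u w where "u \<in> cfg_vertices P B" "w \<in> cfg_vertices P B" "u' = ?g u" "w' = ?g w"
    by auto
  then show "(u', w') \<in> (cfg_adj (map_prod f f ` I))\<^sup>*"
    using walk con unfolding cfg_connected_def by blast
qed

lemma is_configuration_image:
  assumes cfg: "is_configuration v b r k P B I" and f: "inj f"
  shows "is_configuration v b r k (f ` P) (f ` B) (map_prod f f ` I)"
proof -
  let ?J = "map_prod f f ` I"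
  from cfg have fin: "finite P" "finite B" and sub: "I \<subseteq> P \<times> B"
    and card: "card P = v" "card B = b"
    and deg_points: "\<forall>p \<in> P. card {x \<in> B. (p, x) \<in> I} = r"
    and deg_blocks: "\<forall>x \<in> B. card {p \<in> P. (p, x) \<in> I} = k"
    and c4: "no_C4 I" and con: "cfg_connected P B I"
    unfolding is_configuration_def by auto
  have inj_on: "inj_on f A" for A using f by (rule inj_on_subset) simp
  have mem: "(f a, f c) \<in> ?J \<longleftrightarrow> (a, c) \<in> I" for a c
    using f by (auto simp: inj_eq)
  have "{y \<in> f ` B. (f q, y) \<in> ?J} = f ` {y \<in> B. (q, y) \<in> I}" for q
    using sub by (auto simp: mem inj_eq[OF f])
  then have "\<forall>q \<in> f ` P. card {y \<in> f ` B. (q, y) \<in> ?J} = r"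
    using deg_points by (auto simp: card_image[OF inj_on])
  moreover have "{q \<in> f ` P. (q, f y) \<in> ?J} = f ` {q \<in> P. (q, y) \<in> I}" for y
    using sub by (auto simp: mem inj_eq[OF f])
  then have "\<forall>y \<in> f ` B. card {q \<in> f ` P. (q, y) \<in> ?J} = k"
    using deg_blocks by (auto simp: card_image[OF inj_on])
  moreover have "?J \<subseteq> f ` P \<times> f ` B" using sub by auto
  ultimately show ?thesis
    using fin card no_C4_image[OF f c4] cfg_connected_image[OF f con]
    unfolding is_configuration_def by (simp add: card_image[OF inj_on])
qed

section \<open>Switching two edges\<close>

lemma card_insert_Diff_swap:
  assumes "finite A" "a \<in> A" "c \<notin> A"
  shows "card (insert c (A - {a})) = card A"
proof -
  have "card A = Suc (card (A - {a}))" using assms by (intro card.remove)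
  then show ?thesis using assms by (simp add: card_insert_disjoint)
qed

definition edge_switch :: "('a \<times> 'b) set \<Rightarrow> 'a \<Rightarrow> 'b \<Rightarrow> ('a \<times> 'b) set \<Rightarrow> 'a \<Rightarrow> 'b \<Rightarrow> ('a \<times> 'b) set"
  where "edge_switch I1 p x I2 p' x' = (I1 - {(p, x)}) \<union> (I2 - {(p', x')}) \<union> {(p, x'), (p', x)}"

lemma edge_switch_commute: "edge_switch I1 p x I2 p' x' = edge_switch I2 p' x' I1 p x"
  unfolding edge_switch_def by auto

locale edge_switch_setting =
  fixes P1 B1 :: "nat set" and I1 :: "(nat \<times> nat) set" and p x :: nat
    and P2 B2 :: "nat set" and I2 :: "(nat \<times> nat) set" and p' x' :: nat
  assumes I1_sub: "I1 \<subseteq> P1 \<times> B1" and I2_sub: "I2 \<subseteq> P2 \<times> B2"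
    and disjoint_points: "P1 \<inter> P2 = {}" and disjoint_blocks: "B1 \<inter> B2 = {}"
    and edge1: "(p, x) \<in> I1" and edge2: "(p', x') \<in> I2"
begin

abbreviation "S \<equiv> edge_switch I1 p x I2 p' x'"

text \<open>The setting is symmetric in its two halves, so lemmas are stated for the first half
  only and transferred to the second via \<open>swapped\<close> and \<open>edge_switch_commute\<close>.\<close>

lemma swapped: "edge_switch_setting P2 B2 I2 p' x' P1 B1 I1 p x"
  by unfold_locales (use I1_sub I2_sub disjoint_points disjoint_blocks edge1 edge2 in blast)+

lemma edge_ends: "p \<in> P1" "x \<in> B1" "p' \<in> P2" "x' \<in> B2"
  using I1_sub I2_sub edge1 edge2 by auto

lemma edge_switch_subset: "S \<subseteq> (P1 \<union> P2) \<times> (B1 \<union> B2)"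
  using I1_sub I2_sub edge_ends unfolding edge_switch_def by blast

lemma mem_edge_switch_within:
  assumes "q \<in> P1" "y \<in> B1"
  shows "(q, y) \<in> S \<longleftrightarrow> (q, y) \<in> I1 \<and> (q, y) \<noteq> (p, x)"
proof -
  have "q \<notin> P2" "y \<notin> B2" using assms disjoint_points disjoint_blocks by blast+
  then have "(q, y) \<notin> I2" "(q, y) \<noteq> (p, x')" "(q, y) \<noteq> (p', x)"
    using I2_sub edge_ends by auto
  then show ?thesis unfolding edge_switch_def by blast
qed

lemma mem_edge_switch_across:
  assumes "q \<in> P1" "y \<in> B2"
  shows "(q, y) \<in> S \<longleftrightarrow> q = p \<and> y = x'"
proof -
  have "q \<notin> P2" "y \<notin> B1" using assms disjoint_points disjoint_blocks by blast+
  then have "(q, y) \<notin> I1" "(q, y) \<notin> I2" "(q, y) \<noteq> (p', x)"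
    using I1_sub I2_sub edge_ends by auto
  then show ?thesis unfolding edge_switch_def by blast
qed

lemma card_edge_switch_blocks:
  assumes "finite B1" and q: "q \<in> P1"
  shows "card {y \<in> B1 \<union> B2. (q, y) \<in> S} = card {y \<in> B1. (q, y) \<in> I1}"
proof -
  let ?N = "{y \<in> B1. (q, y) \<in> I1}"
  have "{y \<in> B1 \<union> B2. (q, y) \<in> S} = (if q = p then insert x' (?N - {x}) else ?N)"
    using mem_edge_switch_within[OF q] mem_edge_switch_across[OF q] edge_ends by auto
  moreover have "card (insert x' (?N - {x})) = card ?N" if "q = p"
  proof (rule card_insert_Diff_swap)
    show "finite ?N" using assms by simp
    show "x \<in> ?N" using that edge1 edge_ends by simp
    show "x' \<notin> ?N" using edge_ends disjoint_blocks by blast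
  qed
  ultimately show ?thesis by simp
qed

lemma mem_edge_switch_across':
  "q \<in> P2 \<Longrightarrow> y \<in> B1 \<Longrightarrow> (q, y) \<in> S \<longleftrightarrow> q = p' \<and> y = x"
  using edge_switch_setting.mem_edge_switch_across[OF swapped] by (simp add: edge_switch_commute)

lemma card_edge_switch_points:
  assumes "finite P1" and y: "y \<in> B1"
  shows "card {q \<in> P1 \<union> P2. (q, y) \<in> S} = card {q \<in> P1. (q, y) \<in> I1}"
proof -
  let ?N = "{q \<in> P1. (q, y) \<in> I1}"
  have "{q \<in> P1 \<union> P2. (q, y) \<in> S} = (if y = x then insert p' (?N - {p}) else ?N)"
    using mem_edge_switch_within[OF _ y] mem_edge_switch_across'[OF _ y] edge_ends by auto
  moreover have "card (insert p' (?N - {p})) = card ?N" if "y = x"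
  proof (rule card_insert_Diff_swap)
    show "finite ?N" using assms by simp
    show "p \<in> ?N" using that edge1 edge_ends by simp
    show "p' \<notin> ?N" using edge_ends disjoint_points by blast
  qed
  ultimately show ?thesis by simp
qed

lemma no_C4_edge_switch_from_P1:
  assumes c4: "no_C4 I1" and p1: "p1 \<in> P1" and ne: "p1 \<noteq> p2" "x1 \<noteq> x2"
    and edges: "(p1, x1) \<in> S" "(p1, x2) \<in> S" "(p2, x1) \<in> S" "(p2, x2) \<in> S"
  shows False
proof (cases "p2 \<in> P1")
  case p2: True
  have "x1 \<in> B1" "x2 \<in> B1"
    using edges edge_switch_subset mem_edge_switch_across[OF p1] mem_edge_switch_across[OF p2] ne
    by blast+
  then show False
    using c4 ne edges mem_edge_switch_within[OF p1] mem_edge_switch_within[OF p2]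
    unfolding no_C4_def by blast
next
  case False
  then have p2: "p2 \<in> P2" using edges edge_switch_subset by blast
  have "(y = x \<and> p1 \<noteq> p) \<or> (y = x' \<and> p1 = p)" if "y \<in> {x1, x2}" for y
  proof (cases "y \<in> B1")
    case True
    then show ?thesis
      using that edges mem_edge_switch_within[OF p1] mem_edge_switch_across'[OF p2] by blast
  next
    case False
    then show ?thesis
      using that edges edge_switch_subset mem_edge_switch_across[OF p1] by blast
  qed
  then show False using ne(2) by blast
qed

lemma no_C4_edge_switch:
  assumes "no_C4 I1" "no_C4 I2"
  shows "no_C4 S"
proof (unfold no_C4_def, intro notI, elim exE conjE)
  fix p1 p2 x1 x2
  assume ne: "p1 \<noteq> p2" "x1 \<noteq> x2"
    and edges: "(p1, x1) \<in> S" "(p1, x2) \<in> S" "(p2, x1) \<in> S" "(p2, x2) \<in> S"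
  have "p1 \<in> P1 \<or> p1 \<in> P2" using edges edge_switch_subset by blast
  then show False
  proof
    assume "p1 \<in> P1"
    then show False using no_C4_edge_switch_from_P1 assms(1) ne edges by blast
  next
    assume "p1 \<in> P2"
    then show False
      using edge_switch_setting.no_C4_edge_switch_from_P1[OF swapped assms(2)] ne edges
      by (simp add: edge_switch_commute)
  qed
qed

lemma is_configuration_edge_switch:
  assumes cfg1: "is_configuration v1 b1 r k P1 B1 I1"
    and cfg2: "is_configuration v2 b2 r k P2 B2 I2"
    and con1: "cfg_connected P1 B1 (I1 - {(p, x)})"
    and con2: "cfg_connected P2 B2 (I2 - {(p', x')})"
  shows "is_configuration (v1 + v2) (b1 + b2) r k (P1 \<union> P2) (B1 \<union> B2) S"
proof -
  interpret swap: edge_switch_setting P2 B2 I2 p' x' P1 B1 I1 p x by (rule swapped)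
  have S_swap: "swap.S = S" by (rule edge_switch_commute)
  from cfg1 cfg2 have fin: "finite P1" "finite B1" "finite P2" "finite B2"
    unfolding is_configuration_def by auto
  have "card (P1 \<union> P2) = v1 + v2" "card (B1 \<union> B2) = b1 + b2"
    using cfg1 cfg2 fin disjoint_points disjoint_blocks
    unfolding is_configuration_def by (simp_all add: card_Un_disjoint)
  moreover have "card {y \<in> B1 \<union> B2. (q, y) \<in> S} = r" if "q \<in> P1 \<union> P2" for q
    using that card_edge_switch_blocks swap.card_edge_switch_blocks fin cfg1 cfg2
    unfolding S_swap is_configuration_def by (auto simp: Un_commute)
  moreover have "card {q \<in> P1 \<union> P2. (q, y) \<in> S} = k" if "y \<in> B1 \<union> B2" for y
    using that card_edge_switch_points swap.card_edge_switch_points fin cfg1 cfg2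
    unfolding S_swap is_configuration_def by (auto simp: Un_commute)
  moreover have "no_C4 S"
    using cfg1 cfg2 no_C4_edge_switch unfolding is_configuration_def by blast
  moreover have "cfg_connected (P1 \<union> P2) (B1 \<union> B2) S"
    by (rule cfg_connected_Un[OF con1 con2 _ edge_ends(1) edge_ends(4)])
      (auto simp: edge_switch_def)
  ultimately show ?thesis
    using fin edge_switch_subset unfolding is_configuration_def by blast
qed

end

lemma configurable_add:
  assumes "configurable v1 b1 r k" "configurable v2 b2 r k"
    and "v1 > 0" "v2 > 0" "r \<ge> 2" "k \<ge> 2"
  shows "configurable (v1 + v2) (b1 + b2) r k"
proof -
  define f g where "f = (\<lambda>n::nat. 2 * n)" and "g = (\<lambda>n::nat. 2 * n + 1)"
  have "inj f" "inj g" unfolding f_def g_def inj_def by auto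
  have disjoint: "f ` X \<inter> g ` Y = {}" for X Y unfolding f_def g_def by auto presburger
  obtain P1 B1 I1 where cfg1: "is_configuration v1 b1 r k (f ` P1) (f ` B1) (map_prod f f ` I1)"
    using assms(1) is_configuration_image[OF _ \<open>inj f\<close>] unfolding configurable_def by blast
  obtain P2 B2 I2 where cfg2: "is_configuration v2 b2 r k (g ` P2) (g ` B2) (map_prod g g ` I2)"
    using assms(2) is_configuration_image[OF _ \<open>inj g\<close>] unfolding configurable_def by blast
  have "f ` P1 \<noteq> {}" "g ` P2 \<noteq> {}"
    using cfg1 cfg2 assms(3,4) unfolding is_configuration_def by auto
  then obtain p x p' x' where
      edge1: "(p, x) \<in> map_prod f f ` I1"
      and con1: "cfg_connected (f ` P1) (f ` B1) (map_prod f f ` I1 - {(p, x)})"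
      and edge2: "(p', x') \<in> map_prod g g ` I2"
      and con2: "cfg_connected (g ` P2) (g ` B2) (map_prod g g ` I2 - {(p', x')})"
    using configuration_non_bridge cfg1 cfg2 assms(5,6) by metis
  have "edge_switch_setting (f ` P1) (f ` B1) (map_prod f f ` I1) p x
      (g ` P2) (g ` B2) (map_prod g g ` I2) p' x'"
    using cfg1 cfg2 edge1 edge2 disjoint unfolding is_configuration_def
    by unfold_locales auto
  then show ?thesis
    using edge_switch_setting.is_configuration_edge_switch cfg1 cfg2 con1 con2
    unfolding configurable_def by blast
qed

theorem lemma6:
  fixes r k :: nat
  assumes "r \<ge> 2" and "k \<ge> 2"
  shows "0 \<in> D_set r k \<and> (\<forall>d \<in> D_set r k. \<forall>d' \<in> D_set r k. d + d' \<in> D_set r k)"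
proof (intro conjI ballI)
  have "is_configuration 0 0 r k {} {} {}"
    unfolding is_configuration_def no_C4_def cfg_connected_def cfg_vertices_def by auto
  then show "0 \<in> D_set r k" unfolding D_set_def configurable_def by auto
next
  fix d d' assume d: "d \<in> D_set r k" and d': "d' \<in> D_set r k"
  let ?a = "k div gcd r k" and ?c = "r div gcd r k"
  have "?a > 0" using assms by (simp add: div_greater_zero_iff gcd_le2_nat)
  then have "configurable (d * ?a + d' * ?a) (d * ?c + d' * ?c) r k"
    if "d > 0" "d' > 0"
    using configurable_add d d' that assms unfolding D_set_def by simp
  then show "d + d' \<in> D_set r k"
    using d d' unfolding D_set_def by (cases "d = 0 \<or> d' = 0") (auto simp: add_mult_distrib)
qed

end
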